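(* Let $(U,\mathcal{I})$ be a matroid, $f:2^U\to\mathbb{R}_{\ge0}$ a non-negative, monotonically non-decreasing submodular function, and $p\in(0,1)$. The triple of sets $(H,M,N)$ produced by $\mathrm{SIMULATE}$ has the same joint distribution as the triple $(H,M,N)$ produced by $\mathrm{ONLINE}$ (with the same $p$) when the elements of $U$ arrive in a uniformly random order.
   Context: Notation: $n=|U|$; $f_T(e)=f(T\cup\{e\})-f(T)$. All argmax choices below break ties by a fixed rule. $\mathrm{GREEDY}(H)$ for $H\subseteq U$: start with $T=\emptyset$; while some $e\in H\setminus T$ has $T\cup\{e\}\in\mathcal{I}$, add such an $e$ maximizing $f_T(e)$; return $T$. $\mathrm{ONLINE}$: draw $m\sim\mathrm{Binom}(n,p)$; let $H$ be the set of the first $m$ arriving elements (all rejected); $M=\mathrm{GREEDY}(H)$; $N=\emptyset$; for each subsequent arriving $e$, if $\mathrm{GREEDY}(H\cup\{e\})\neq\mathrm{GREEDY}(H)$ then add $e$ to $N$ (and accept it if it keeps the accepted set independent). $\mathrm{SIMULATE}$: each element of $U$ is independently put into $H$ with probability $p$. Start with $M=N=\emptyset$. While there exists $e\in U\setminus(M\cup N)$ with $M\cup\{e\}\in\mathcal{I}$, take such an $e$ maximizing $f_M(e)$; if $e\in H$ add it to $M$, otherwise add it to $N$. *)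

theory Defs
  imports "HOL-Probability.Probability" "HOL-Combinatorics.Multiset_Permutations"
begin

definition matroid :: "'a set \<Rightarrow> ('a set \<Rightarrow> bool) \<Rightarrow> bool" where
  "matroid U indep \<longleftrightarrow>
     finite U \<and>
     (\<forall>X. indep X \<longrightarrow> X \<subseteq> U) \<and>
     indep {} \<and>
     (\<forall>X Y. indep X \<and> Y \<subseteq> X \<longrightarrow> indep Y) \<and>
     (\<forall>X Y. indep X \<and> indep Y \<and> card X < card Y \<longrightarrow>
        (\<exists>e \<in> Y - X. indep (insert e X)))"

definition nonneg_on :: "'a set \<Rightarrow> ('a set \<Rightarrow> real) \<Rightarrow> bool" where
  "nonneg_on U f \<longleftrightarrow> (\<forall>X \<subseteq> U. 0 \<le> f X)"

definition monotone_set_fun :: "'a set \<Rightarrow> ('a set \<Rightarrow> real) \<Rightarrow> bool" where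
  "monotone_set_fun U f \<longleftrightarrow> (\<forall>X Y. X \<subseteq> Y \<and> Y \<subseteq> U \<longrightarrow> f X \<le> f Y)"

definition submodular :: "'a set \<Rightarrow> ('a set \<Rightarrow> real) \<Rightarrow> bool" where
  "submodular U f \<longleftrightarrow>
     (\<forall>X Y. X \<subseteq> U \<and> Y \<subseteq> U \<longrightarrow> f (X \<union> Y) + f (X \<inter> Y) \<le> f X + f Y)"

definition marg :: "('a set \<Rightarrow> real) \<Rightarrow> 'a set \<Rightarrow> 'a \<Rightarrow> real" where
  "marg f T e = f (insert e T) - f T"

definition best :: "('a set \<Rightarrow> real) \<Rightarrow> ('a \<Rightarrow> nat) \<Rightarrow> 'a set \<Rightarrow> 'a set \<Rightarrow> 'a" where
  "best f rk T C = (THE e. e \<in> C \<and> (\<forall>e' \<in> C. marg f T e' < marg f T e \<or>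
                              (marg f T e' = marg f T e \<and> rk e \<le> rk e')))"

definition greedy_step ::
  "('a set \<Rightarrow> bool) \<Rightarrow> ('a set \<Rightarrow> real) \<Rightarrow> ('a \<Rightarrow> nat) \<Rightarrow> 'a set \<Rightarrow> 'a set \<Rightarrow> 'a set" where
  "greedy_step indep f rk H T =
     (let C = {e \<in> H - T. indep (insert e T)} in
      if C = {} then T else insert (best f rk T C) T)"

text \<open>Each non-final step adds a new element of \<open>H\<close>, so \<open>card H\<close> iterations
  reach the termination point of the while loop (for finite \<open>H\<close>).\<close>
definition greedy ::
  "('a set \<Rightarrow> bool) \<Rightarrow> ('a set \<Rightarrow> real) \<Rightarrow> ('a \<Rightarrow> nat) \<Rightarrow> 'a set \<Rightarrow> 'a set" where
  "greedy indep f rk H = (greedy_step indep f rk H ^^ card H) {}"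

definition online ::
  "'a set \<Rightarrow> ('a set \<Rightarrow> bool) \<Rightarrow> ('a set \<Rightarrow> real) \<Rightarrow> ('a \<Rightarrow> nat) \<Rightarrow> real
     \<Rightarrow> ('a set \<times> 'a set \<times> 'a set) pmf" where
  "online U indep f rk p =
     bind_pmf (pmf_of_set (permutations_of_set U)) (\<lambda>xs.
     bind_pmf (binomial_pmf (card U) p) (\<lambda>m.
       let H = set (take m xs) in
       return_pmf (H, greedy indep f rk H,
                   {e \<in> set (drop m xs). greedy indep f rk (insert e H) \<noteq> greedy indep f rk H})))"

definition sim_step ::
  "'a set \<Rightarrow> ('a set \<Rightarrow> bool) \<Rightarrow> ('a set \<Rightarrow> real) \<Rightarrow> ('a \<Rightarrow> nat) \<Rightarrow> 'a set
     \<Rightarrow> 'a set \<times> 'a set \<Rightarrow> 'a set \<times> 'a set" where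
  "sim_step U indep f rk H MN =
     (let M = fst MN; N = snd MN;
          C = {e \<in> U - (M \<union> N). indep (insert e M)} in
      if C = {} then MN
      else (let e = best f rk M C in
            if e \<in> H then (insert e M, N) else (M, insert e N)))"

text \<open>Each non-final step adds a new element of \<open>U\<close> to \<open>M \<union> N\<close>, so \<open>card U\<close>
  iterations reach the termination point of the while loop.\<close>
definition sim_run ::
  "'a set \<Rightarrow> ('a set \<Rightarrow> bool) \<Rightarrow> ('a set \<Rightarrow> real) \<Rightarrow> ('a \<Rightarrow> nat) \<Rightarrow> 'a set
     \<Rightarrow> 'a set \<times> 'a set" where
  "sim_run U indep f rk H = (sim_step U indep f rk H ^^ card U) ({}, {})"

definition simulate ::
  "'a set \<Rightarrow> ('a set \<Rightarrow> bool) \<Rightarrow> ('a set \<Rightarrow> real) \<Rightarrow> ('a \<Rightarrow> nat) \<Rightarrow> real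
     \<Rightarrow> ('a set \<times> 'a set \<times> 'a set) pmf" where
  "simulate U indep f rk p =
     bind_pmf (Pi_pmf U False (\<lambda>_. bernoulli_pmf p)) (\<lambda>b.
       let H = {e \<in> U. b e}; MN = sim_run U indep f rk H in
       return_pmf (H, fst MN, snd MN))"

end

theory Submission
  imports Defs
begin

text \<open>For a fixed sample \<open>H\<close>, SIMULATE moves into \<open>M\<close> exactly the elements GREEDY(H) picks,
  in the same order, and it puts an element \<open>e \<notin> H\<close> into \<open>N\<close> iff at some intermediate state
  \<open>T\<close> of GREEDY(H) the element \<open>e\<close> could be added to \<open>T\<close> and would be preferred to every
  remaining candidate from \<open>H\<close>. This is exactly the condition under which adding \<open>e\<close> to \<open>H\<close>
  changes the greedy solution, so both algorithms compute the same function of \<open>H\<close>.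
  It remains that their samples have the same law: a prefix of binomial length of a uniformly
  random ordering of \<open>U\<close> contains each element independently with probability \<open>p\<close>.\<close>

definition beats :: "('a set \<Rightarrow> real) \<Rightarrow> ('a \<Rightarrow> nat) \<Rightarrow> 'a set \<Rightarrow> 'a \<Rightarrow> 'a \<Rightarrow> bool" where
  "beats f rk T e h \<longleftrightarrow> marg f T h < marg f T e \<or> (marg f T h = marg f T e \<and> rk e < rk h)"

lemma beats_trans: "beats f rk T a b \<Longrightarrow> beats f rk T b c \<Longrightarrow> beats f rk T a c"
  unfolding beats_def by auto

lemma beats_asym: "beats f rk T a b \<Longrightarrow> \<not> beats f rk T b a"
  unfolding beats_def by auto

lemma beats_total:
  "inj_on rk C \<Longrightarrow> a \<in> C \<Longrightarrow> b \<in> C \<Longrightarrow> a \<noteq> b \<Longrightarrow> beats f rk T a b \<or> beats f rk T b a"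
  unfolding beats_def by (metis inj_on_def linorder_neqE_linordered_idom nat_neq_iff)

lemma best_eqI:
  assumes "e \<in> C" and "\<forall>e'\<in>C. e' \<noteq> e \<longrightarrow> beats f rk T e e'"
  shows "best f rk T C = e"
  unfolding best_def
proof (rule the_equality)
  show "e \<in> C \<and> (\<forall>e'\<in>C. marg f T e' < marg f T e \<or> marg f T e' = marg f T e \<and> rk e \<le> rk e')"
    using assms unfolding beats_def by force
next
  fix x
  assume x: "x \<in> C \<and> (\<forall>e'\<in>C. marg f T e' < marg f T x \<or> marg f T e' = marg f T x \<and> rk x \<le> rk e')"
  show "x = e"
  proof (rule ccontr)
    assume "x \<noteq> e"
    with assms x have "beats f rk T e x" by auto
    moreover have "marg f T e < marg f T x \<or> marg f T e = marg f T x \<and> rk x \<le> rk e"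
      using x assms(1) by auto
    ultimately show False unfolding beats_def by auto
  qed
qed

lemma best_beats:
  assumes "finite C" "C \<noteq> {}" "inj_on rk C"
  shows "best f rk T C \<in> C \<and> (\<forall>e'\<in>C. e' \<noteq> best f rk T C \<longrightarrow> beats f rk T (best f rk T C) e')"
proof -
  have "\<exists>e\<in>C. \<forall>e'\<in>C. e' \<noteq> e \<longrightarrow> beats f rk T e e'"
    using assms
  proof (induction C rule: finite_ne_induct)
    case (singleton x)
    then show ?case by auto
  next
    case (insert x F)
    then obtain e where e: "e \<in> F" "\<forall>e'\<in>F. e' \<noteq> e \<longrightarrow> beats f rk T e e'"
      by (auto intro: inj_on_subset)
    with insert have "beats f rk T x e \<or> beats f rk T e x"
      by (intro beats_total[of rk "insert x F"]) auto
    with e show ?case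
      by (metis beats_trans insert_iff)
  qed
  then show ?thesis
    using best_eqI by metis
qed

lemma best_insert:
  assumes "finite C" "inj_on rk (insert e C)" "e \<notin> C"
  shows "best f rk T (insert e C) = (if \<forall>h\<in>C. beats f rk T e h then e else best f rk T C)"
proof (cases "\<forall>h\<in>C. beats f rk T e h")
  case True
  then show ?thesis
    by (simp add: best_eqI)
next
  case False
  then obtain h where h: "h \<in> C" "\<not> beats f rk T e h"
    by blast
  define b where "b = best f rk T C"
  have "C \<noteq> {}"
    using h(1) by blast
  then have b: "b \<in> C" "\<forall>e'\<in>C. e' \<noteq> b \<longrightarrow> beats f rk T b e'"
    using best_beats[OF assms(1) _ inj_on_subset[OF assms(2) subset_insertI]]
    unfolding b_def by auto
  have "beats f rk T h e"
    using beats_total[OF assms(2), of h e] h assms(3) by auto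
  then have "beats f rk T b e"
    using b h(1) beats_trans by metis
  then have "best f rk T (insert e C) = b"
    using b by (intro best_eqI) auto
  with False show ?thesis
    unfolding b_def by auto
qed

lemma funpow_fixpoint_stable:
  assumes "s ((s ^^ j) x) = (s ^^ j) x" "j \<le> k"
  shows "(s ^^ k) x = (s ^^ j) x"
  using assms(2) by (induction rule: dec_induct) (use assms(1) in auto)

lemma funpow_reaches_fixpoint:
  fixes \<mu> :: "'b \<Rightarrow> nat"
  assumes invariant: "\<And>x. P x \<Longrightarrow> P (s x)" and "P x\<^sub>0"
    and increase: "\<And>x. P x \<Longrightarrow> s x \<noteq> x \<Longrightarrow> \<mu> x < \<mu> (s x)"
    and bounded: "\<And>x. P x \<Longrightarrow> \<mu> x \<le> n"
  shows "s ((s ^^ n) x\<^sub>0) = (s ^^ n) x\<^sub>0"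
proof -
  have P: "P ((s ^^ k) x\<^sub>0)" for k
    by (induction k) (auto simp: assms)
  have progress: "s ((s ^^ k) x\<^sub>0) = (s ^^ k) x\<^sub>0 \<or> k \<le> \<mu> ((s ^^ k) x\<^sub>0)" for k
  proof (induction k)
    case (Suc k)
    then show ?case
      using increase[OF P, of k] by fastforce
  qed simp
  show ?thesis
  proof (rule ccontr)
    assume "s ((s ^^ n) x\<^sub>0) \<noteq> (s ^^ n) x\<^sub>0"
    then have "n < \<mu> (s ((s ^^ n) x\<^sub>0))"
      using progress[of n] increase[OF P] by fastforce
    with bounded[OF invariant[OF P[of n]]] show False
      by simp
  qed
qed

lemma set_drop_eq_set_Diff_set_take:
  assumes "distinct xs"
  shows "set (drop m xs) = set xs - set (take m xs)"
proof -
  have "set xs = set (take m xs) \<union> set (drop m xs)"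
    by (metis append_take_drop_id set_append)
  with set_take_disj_set_drop_if_distinct[OF assms order_refl] show ?thesis
    by blast
qed

lemma permutations_with_prefix_set:
  assumes "finite U" "A \<subseteq> U"
  shows "{xs \<in> permutations_of_set U. set (take (card A) xs) = A} =
    (\<lambda>(ys, zs). ys @ zs) ` (permutations_of_set A \<times> permutations_of_set (U - A))"
proof (intro equalityI subsetI)
  fix xs
  assume "xs \<in> {xs \<in> permutations_of_set U. set (take (card A) xs) = A}"
  then have xs: "distinct xs" "set xs = U" "set (take (card A) xs) = A"
    by (auto dest: permutations_of_setD)
  then have "(take (card A) xs, drop (card A) xs) \<in> permutations_of_set A \<times> permutations_of_set (U - A)"
    using set_drop_eq_set_Diff_set_take[OF xs(1)] by (auto intro: permutations_of_setI)
  then show "xs \<in> (\<lambda>(ys, zs). ys @ zs) ` (permutations_of_set A \<times> permutations_of_set (U - A))"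
    by (rule rev_image_eqI) simp
next
  fix xs
  assume "xs \<in> (\<lambda>(ys, zs). ys @ zs) ` (permutations_of_set A \<times> permutations_of_set (U - A))"
  then obtain ys zs where "ys \<in> permutations_of_set A" "zs \<in> permutations_of_set (U - A)" "xs = ys @ zs"
    by auto
  moreover from this(1) have "length ys = card A"
    by (rule length_finite_permutations_of_set)
  ultimately show "xs \<in> {xs \<in> permutations_of_set U. set (take (card A) xs) = A}"
    using assms(2) by (auto simp: permutations_of_set_def)
qed

lemma card_permutations_with_prefix_set:
  assumes "finite U" "A \<subseteq> U"
  shows "card {xs \<in> permutations_of_set U. set (take (card A) xs) = A} =
    fact (card A) * fact (card U - card A)"
proof -
  have "inj_on (\<lambda>(ys, zs). ys @ zs) (permutations_of_set A \<times> permutations_of_set (U - A))"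
    by (intro inj_onI) (auto simp: append_eq_append_conv length_finite_permutations_of_set)
  moreover have "finite A"
    using assms finite_subset by blast
  ultimately show ?thesis
    using assms by (simp add: permutations_with_prefix_set card_image card_cartesian_product card_Diff_subset)
qed

lemma pmf_random_subset:
  assumes fU: "finite U" and p: "0 \<le> p" "p \<le> 1"
  shows "pmf (map_pmf (\<lambda>b. {e \<in> U. b e}) (Pi_pmf U False (\<lambda>_. bernoulli_pmf p))) A =
    (if A \<subseteq> U then p ^ card A * (1 - p) ^ (card U - card A) else 0)"
proof -
  let ?M = "Pi_pmf U False (\<lambda>_. bernoulli_pmf p)"
  let ?g = "\<lambda>b. {e \<in> U. b e}"
  have pmf_eq: "pmf (map_pmf ?g ?M) A = measure ?M (?g -` {A} \<inter> set_pmf ?M)"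
    by (simp add: pmf_map measure_Int_set_pmf)
  show ?thesis
  proof (cases "A \<subseteq> U")
    case False
    then have "?g -` {A} = {}"
      by auto
    with pmf_eq False show ?thesis
      by simp
  next
    case True
    have "?g -` {A} \<inter> set_pmf ?M = {\<lambda>x. x \<in> A} \<inter> set_pmf ?M"
    proof (intro equalityI subsetI)
      fix b
      assume b: "b \<in> ?g -` {A} \<inter> set_pmf ?M"
      then have "\<forall>x. x \<notin> U \<longrightarrow> \<not> b x"
        using set_Pi_pmf_subset[OF fU, of False] by auto
      with b True have "b = (\<lambda>x. x \<in> A)"
        by blast
      with b show "b \<in> {\<lambda>x. x \<in> A} \<inter> set_pmf ?M"
        by simp
    qed (use True in auto)
    then have "pmf (map_pmf ?g ?M) A = pmf ?M (\<lambda>x. x \<in> A)"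
      using pmf_eq by (simp add: measure_Int_set_pmf measure_pmf_single)
    also have "\<dots> = (\<Prod>x\<in>U. if x \<in> A then p else 1 - p)"
      using True p by (subst pmf_Pi'[OF fU]) (auto intro: prod.cong)
    also have "\<dots> = p ^ card A * (1 - p) ^ (card U - card A)"
      using True fU by (simp add: prod.If_cases Int_absorb1 Diff_eq[symmetric] card_Diff_subset finite_subset)
    finally show ?thesis
      using True by simp
  qed
qed

lemma pmf_prefix_of_permutation:
  assumes xs: "xs \<in> permutations_of_set U" and p: "0 \<le> p" "p \<le> 1"
  shows "pmf (map_pmf (\<lambda>m. set (take m xs)) (binomial_pmf (card U) p)) A =
    (if set (take (card A) xs) = A then pmf (binomial_pmf (card U) p) (card A) else 0)"
proof -
  let ?B = "binomial_pmf (card U) p"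
  have "distinct xs" "length xs = card U"
    using xs permutations_of_setD length_finite_permutations_of_set by blast+
  then have card_prefix: "card (set (take m xs)) = m" if "m \<le> card U" for m
    using that by (simp add: distinct_card)
  have support: "set_pmf ?B \<subseteq> {..card U}"
    using p by (auto simp: set_pmf_binomial_eq)
  have "(\<lambda>m. set (take m xs)) -` {A} \<inter> set_pmf ?B =
      (if set (take (card A) xs) = A then {card A} else {}) \<inter> set_pmf ?B"
  proof (intro equalityI subsetI)
    fix m
    assume m: "m \<in> (\<lambda>m. set (take m xs)) -` {A} \<inter> set_pmf ?B"
    with support card_prefix have "card A = m"
      by auto
    with m show "m \<in> (if set (take (card A) xs) = A then {card A} else {}) \<inter> set_pmf ?B"
      by auto
  qed (auto split: if_splits)
  then have "pmf (map_pmf (\<lambda>m. set (take m xs)) ?B) A =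
      measure ?B (if set (take (card A) xs) = A then {card A} else {})"
    by (metis measure_Int_set_pmf pmf_map)
  then show ?thesis
    by (simp add: measure_pmf_single)
qed

lemma pmf_random_prefix:
  assumes fU: "finite U" and p: "0 \<le> p" "p \<le> 1"
  shows "pmf (bind_pmf (pmf_of_set (permutations_of_set U))
           (\<lambda>xs. map_pmf (\<lambda>m. set (take m xs)) (binomial_pmf (card U) p))) A =
    (if A \<subseteq> U then p ^ card A * (1 - p) ^ (card U - card A) else 0)"
proof -
  let ?S = "permutations_of_set U"
  let ?B = "binomial_pmf (card U) p"
  let ?k = "card A"
  let ?E = "{xs \<in> ?S. set (take ?k xs) = A}"
  have S: "?S \<noteq> {}" "finite ?S"
    using fU by auto
  have "pmf (bind_pmf (pmf_of_set ?S) (\<lambda>xs. map_pmf (\<lambda>m. set (take m xs)) ?B)) A =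
      (\<Sum>xs\<in>?S. pmf (map_pmf (\<lambda>m. set (take m xs)) ?B) A) / card ?S"
    unfolding pmf_bind by (rule integral_pmf_of_set[OF S])
  also have "(\<Sum>xs\<in>?S. pmf (map_pmf (\<lambda>m. set (take m xs)) ?B) A) =
      (\<Sum>xs\<in>?S. if set (take ?k xs) = A then pmf ?B ?k else 0)"
    by (intro sum.cong refl pmf_prefix_of_permutation[OF _ p])
  also have "\<dots> = card ?E * pmf ?B ?k"
    by (simp add: sum.inter_filter[OF S(2), symmetric])
  finally have pmf_eq: "pmf (bind_pmf (pmf_of_set ?S) (\<lambda>xs. map_pmf (\<lambda>m. set (take m xs)) ?B)) A =
      card ?E * pmf ?B ?k / card ?S" .
  show ?thesis
  proof (cases "A \<subseteq> U")
    case False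
    have "set (take ?k xs) \<subseteq> U" if "xs \<in> ?S" for xs
      using that permutations_of_setD(1) set_take_subset by metis
    with False have "?E = {}"
      by blast
    with pmf_eq False show ?thesis
      by simp
  next
    case True
    then have "?k \<le> card U"
      using fU by (simp add: card_mono)
    then show ?thesis
      using pmf_eq True fU pmf_binomial[OF p, of "card U" ?k]
      by (simp add: card_permutations_with_prefix_set binomial_fact field_simps)
  qed
qed

lemma random_subset_eq_random_prefix:
  assumes "finite U" "0 \<le> p" "p \<le> 1"
  shows "map_pmf (\<lambda>b. {e \<in> U. b e}) (Pi_pmf U False (\<lambda>_. bernoulli_pmf p)) =
    bind_pmf (pmf_of_set (permutations_of_set U))
           (\<lambda>xs. map_pmf (\<lambda>m. set (take m xs)) (binomial_pmf (card U) p))"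
  by (rule pmf_eqI) (simp only: pmf_random_subset[OF assms] pmf_random_prefix[OF assms])

locale greedy_instance =
  fixes U :: "'a set" and indep :: "'a set \<Rightarrow> bool" and f :: "'a set \<Rightarrow> real" and rk :: "'a \<Rightarrow> nat"
  assumes finite_U: "finite U" and inj_rk: "inj_on rk U"
begin

definition candidates :: "'a set \<Rightarrow> 'a set \<Rightarrow> 'a set" where
  "candidates T S = {e \<in> S - T. indep (insert e T)}"

definition greedy_prefix :: "'a set \<Rightarrow> nat \<Rightarrow> 'a set" where
  "greedy_prefix H k = (greedy_step indep f rk H ^^ k) {}"

text \<open>The elements outside \<open>H\<close> that GREEDY would take next from state \<open>T\<close>
  if they were added to \<open>H\<close>.\<close>
definition preemptors :: "'a set \<Rightarrow> 'a set \<Rightarrow> 'a set" where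
  "preemptors H T = {e \<in> candidates T (U - H). \<forall>h\<in>candidates T H. beats f rk T e h}"

definition greedy_outcome :: "'a set \<Rightarrow> 'a set \<times> 'a set \<times> 'a set" where
  "greedy_outcome H =
     (H, greedy indep f rk H, {e \<in> U - H. greedy indep f rk (insert e H) \<noteq> greedy indep f rk H})"

lemma greedy_step_eq:
  "greedy_step indep f rk H T =
    (if candidates T H = {} then T else insert (best f rk T (candidates T H)) T)"
  unfolding greedy_step_def Let_def candidates_def ..

lemma greedy_step_no_candidates:
  "candidates T H = {} \<Longrightarrow> greedy_step indep f rk H T = T"
  by (simp add: greedy_step_eq)

lemma greedy_step_best_candidate:
  "candidates T H \<noteq> {} \<Longrightarrow> greedy_step indep f rk H T = insert (best f rk T (candidates T H)) T"
  by (simp add: greedy_step_eq)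

lemma best_candidate:
  assumes "S \<subseteq> U" "candidates T S \<noteq> {}"
  shows "best f rk T (candidates T S) \<in> candidates T S \<and>
    (\<forall>e'\<in>candidates T S. e' \<noteq> best f rk T (candidates T S) \<longrightarrow>
       beats f rk T (best f rk T (candidates T S)) e')"
proof -
  have "candidates T S \<subseteq> U"
    using assms(1) unfolding candidates_def by auto
  then show ?thesis
    using best_beats assms(2) finite_U inj_rk by (metis finite_subset inj_on_subset)
qed

lemma greedy_step_between:
  assumes "H \<subseteq> U" "T \<subseteq> H"
  shows "T \<subseteq> greedy_step indep f rk H T \<and> greedy_step indep f rk H T \<subseteq> H"
proof (cases "candidates T H = {}")
  case False
  then have "best f rk T (candidates T H) \<in> H"
    using best_candidate[OF assms(1)] unfolding candidates_def by blast
  with False assms(2) show ?thesis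
    by (simp add: greedy_step_best_candidate subset_insertI)
qed (use assms in \<open>simp add: greedy_step_no_candidates\<close>)

lemma greedy_prefix_0 [simp]: "greedy_prefix H 0 = {}"
  unfolding greedy_prefix_def by simp

lemma greedy_prefix_Suc [simp]:
  "greedy_prefix H (Suc k) = greedy_step indep f rk H (greedy_prefix H k)"
  unfolding greedy_prefix_def by simp

lemma greedy_prefix_subset: "H \<subseteq> U \<Longrightarrow> greedy_prefix H k \<subseteq> H"
  by (induction k) (use greedy_step_between in auto)

lemma greedy_prefix_mono:
  assumes "H \<subseteq> U" "k \<le> l"
  shows "greedy_prefix H k \<subseteq> greedy_prefix H l"
  using assms(2)
proof (induction rule: dec_induct)
  case (step n)
  then show ?case
    using greedy_step_between[OF assms(1) greedy_prefix_subset[OF assms(1)]] by force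
qed simp

lemma greedy_prefix_stable:
  "greedy_step indep f rk H (greedy_prefix H j) = greedy_prefix H j \<Longrightarrow> j \<le> k \<Longrightarrow>
    greedy_prefix H k = greedy_prefix H j"
  unfolding greedy_prefix_def by (rule funpow_fixpoint_stable)

lemma greedy_prefix_card_fixpoint:
  assumes HU: "H \<subseteq> U"
  shows "greedy_step indep f rk H (greedy_prefix H (card H)) = greedy_prefix H (card H)"
  unfolding greedy_prefix_def
proof (rule funpow_reaches_fixpoint[where P = "\<lambda>T. T \<subseteq> H" and \<mu> = card])
  have fin: "finite H"
    using HU finite_U finite_subset by blast
  show "greedy_step indep f rk H T \<subseteq> H" if "T \<subseteq> H" for T
    using greedy_step_between[OF HU that] by blast
  show "card T < card (greedy_step indep f rk H T)"
    if "T \<subseteq> H" "greedy_step indep f rk H T \<noteq> T" for T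
    using greedy_step_between[OF HU that(1)] that(2) fin
    by (metis finite_subset psubsetI psubset_card_mono)
  show "card T \<le> card H" if "T \<subseteq> H" for T
    using that fin by (rule card_mono[rotated])
qed simp

lemma greedy_eq_greedy_prefix_card: "greedy indep f rk H = greedy_prefix H (card H)"
  unfolding greedy_def greedy_prefix_def ..

lemma greedy_eq_greedy_prefix:
  assumes "H \<subseteq> U" "greedy_step indep f rk H (greedy_prefix H j) = greedy_prefix H j"
  shows "greedy indep f rk H = greedy_prefix H j"
proof -
  have "greedy_prefix H j = greedy_prefix H (max j (card H))"
    by (rule greedy_prefix_stable[OF assms(2), symmetric]) simp
  also have "\<dots> = greedy_prefix H (card H)"
    by (rule greedy_prefix_stable[OF greedy_prefix_card_fixpoint[OF assms(1)]]) simp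
  finally show ?thesis
    by (simp only: greedy_eq_greedy_prefix_card)
qed

lemma greedy_prefix_subset_greedy:
  assumes "H \<subseteq> U"
  shows "greedy_prefix H k \<subseteq> greedy indep f rk H"
proof (cases "k \<le> card H")
  case True
  then show ?thesis
    unfolding greedy_eq_greedy_prefix_card by (rule greedy_prefix_mono[OF assms])
next
  case False
  then have "greedy_prefix H k = greedy_prefix H (card H)"
    by (intro greedy_prefix_stable[OF greedy_prefix_card_fixpoint[OF assms]]) simp
  then show ?thesis
    unfolding greedy_eq_greedy_prefix_card by (rule equalityD1)
qed

lemma greedy_step_insert:
  assumes HU: "H \<subseteq> U" and e: "e \<in> U - H" and TH: "T \<subseteq> H"
  shows "greedy_step indep f rk (insert e H) T =
    (if e \<in> preemptors H T then insert e T else greedy_step indep f rk H T)"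
proof (cases "indep (insert e T)")
  case True
  have C: "candidates T (insert e H) = insert e (candidates T H)"
    using True e TH unfolding candidates_def by auto
  have "insert e (candidates T H) \<subseteq> U"
    using e HU unfolding candidates_def by auto
  moreover have "e \<notin> candidates T H"
    using e unfolding candidates_def by auto
  ultimately have best: "best f rk T (insert e (candidates T H)) =
      (if \<forall>h\<in>candidates T H. beats f rk T e h then e else best f rk T (candidates T H))"
    using best_insert finite_U inj_rk by (metis finite_insert finite_subset inj_on_subset)
  have e_cand: "e \<in> candidates T (U - H)"
    using True e TH unfolding candidates_def by auto
  show ?thesis
  proof (cases "e \<in> preemptors H T")
    case True
    then show ?thesis
      using C best unfolding preemptors_def by (simp add: greedy_step_best_candidate)
  next
    case False
    then have not_all: "\<not> (\<forall>h\<in>candidates T H. beats f rk T e h)"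
      using e_cand unfolding preemptors_def by auto
    then have "candidates T H \<noteq> {}"
      by auto
    with False show ?thesis
      using C best[unfolded if_not_P[OF not_all]] by (simp add: greedy_step_best_candidate)
  qed
next
  case False
  then have "candidates T (insert e H) = candidates T H" "e \<notin> preemptors H T"
    unfolding candidates_def preemptors_def by auto
  then show ?thesis
    by (simp add: greedy_step_eq)
qed

lemma greedy_prefix_insert_cases:
  assumes HU: "H \<subseteq> U" and e: "e \<in> U - H"
  shows "greedy_prefix (insert e H) k = greedy_prefix H k \<or> e \<in> greedy_prefix (insert e H) k"
proof (induction k)
  case (Suc k)
  from Suc.IH show ?case
  proof
    assume "greedy_prefix (insert e H) k = greedy_prefix H k"
    then show ?case
      using greedy_step_insert[OF HU e greedy_prefix_subset[OF HU, of k]] by simp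
  next
    assume "e \<in> greedy_prefix (insert e H) k"
    moreover have "greedy_prefix (insert e H) k \<subseteq> greedy_prefix (insert e H) (Suc k)"
      using HU e by (intro greedy_prefix_mono) auto
    ultimately show ?case
      by blast
  qed
qed simp

lemma greedy_insert_changes_iff:
  assumes HU: "H \<subseteq> U" and e: "e \<in> U - H"
  shows "greedy indep f rk (insert e H) \<noteq> greedy indep f rk H \<longleftrightarrow>
    (\<exists>k. e \<in> preemptors H (greedy_prefix H k))"
proof
  assume changed: "greedy indep f rk (insert e H) \<noteq> greedy indep f rk H"
  show "\<exists>k. e \<in> preemptors H (greedy_prefix H k)"
  proof (rule ccontr)
    assume "\<nexists>k. e \<in> preemptors H (greedy_prefix H k)"
    then have same: "greedy_prefix (insert e H) k = greedy_prefix H k" for k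
      by (induction k) (simp_all add: greedy_step_insert[OF HU e greedy_prefix_subset[OF HU]])
    have "card (insert e H) = Suc (card H)"
      using e HU finite_U by (simp add: finite_subset)
    then have "greedy indep f rk (insert e H) = greedy_prefix (insert e H) (Suc (card H))"
      by (simp only: greedy_eq_greedy_prefix_card)
    also have "\<dots> = greedy_prefix H (Suc (card H))"
      by (rule same)
    also have "\<dots> = greedy_prefix H (card H)"
      by (rule greedy_prefix_stable[OF greedy_prefix_card_fixpoint[OF HU]]) simp
    also have "\<dots> = greedy indep f rk H"
      by (simp only: greedy_eq_greedy_prefix_card)
    finally show False
      using changed by simp
  qed
next
  assume "\<exists>k. e \<in> preemptors H (greedy_prefix H k)"
  then obtain k where k: "e \<in> preemptors H (greedy_prefix H k)"
    by blast
  have H'U: "insert e H \<subseteq> U"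
    using HU e by auto
  have "e \<in> greedy_prefix (insert e H) (Suc k)"
    using greedy_prefix_insert_cases[OF HU e, of k] greedy_prefix_mono[OF H'U, of k "Suc k"]
      greedy_step_insert[OF HU e greedy_prefix_subset[OF HU]] k
    by auto
  then have "e \<in> greedy indep f rk (insert e H)"
    using greedy_prefix_subset_greedy[OF H'U] by blast
  moreover have "e \<notin> greedy indep f rk H"
    using greedy_prefix_subset[OF HU] e unfolding greedy_eq_greedy_prefix_card by blast
  ultimately show "greedy indep f rk (insert e H) \<noteq> greedy indep f rk H"
    by blast
qed

lemma sim_step_eq:
  "sim_step U indep f rk H (M, N) =
    (if candidates M (U - N) = {} then (M, N)
     else let e = best f rk M (candidates M (U - N)) in
       if e \<in> H then (insert e M, N) else (M, insert e N))"
proof -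
  have "{e \<in> U - (M \<union> N). indep (insert e M)} = candidates M (U - N)"
    unfolding candidates_def by auto
  then show ?thesis
    unfolding sim_step_def Let_def by simp
qed

lemma sim_step_no_candidates:
  "candidates M (U - N) = {} \<Longrightarrow> sim_step U indep f rk H (M, N) = (M, N)"
  by (simp add: sim_step_eq)

lemma sim_step_best_candidate:
  "candidates M (U - N) \<noteq> {} \<Longrightarrow> sim_step U indep f rk H (M, N) =
    (let e = best f rk M (candidates M (U - N)) in
     if e \<in> H then (insert e M, N) else (M, insert e N))"
  by (simp add: sim_step_eq)

lemma sim_step_adds_element:
  assumes "candidates M (U - N) \<noteq> {}"
  obtains e where "e \<notin> M \<union> N"
    "fst (sim_step U indep f rk H (M, N)) \<union> snd (sim_step U indep f rk H (M, N)) = insert e (M \<union> N)"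
proof -
  let ?e = "best f rk M (candidates M (U - N))"
  have "?e \<notin> M \<union> N"
    using best_candidate[of "U - N" M] assms unfolding candidates_def by auto
  then show ?thesis
    using that sim_step_best_candidate[OF assms, of H] by (cases "?e \<in> H") (auto simp: Let_def)
qed

definition sim_invariant :: "'a set \<Rightarrow> 'a set \<times> 'a set \<Rightarrow> bool" where
  "sim_invariant H MN \<longleftrightarrow> (\<exists>j. fst MN = greedy_prefix H j \<and>
      (\<forall>i<j. preemptors H (greedy_prefix H i) \<subseteq> snd MN) \<and>
      snd MN \<subseteq> (\<Union>i\<le>j. preemptors H (greedy_prefix H i)))"

lemma preemptors_subset: "preemptors H T \<subseteq> U - H"
  unfolding preemptors_def candidates_def by auto

lemma sim_invariant_subset:
  assumes "H \<subseteq> U" "sim_invariant H (M, N)"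
  shows "M \<subseteq> H" "N \<subseteq> U - H"
proof -
  obtain j where "M = greedy_prefix H j" and N: "N \<subseteq> (\<Union>i\<le>j. preemptors H (greedy_prefix H i))"
    using assms(2) unfolding sim_invariant_def by auto
  then show "M \<subseteq> H"
    using greedy_prefix_subset[OF assms(1)] by simp
  show "N \<subseteq> U - H"
    using N preemptors_subset[of H] by blast
qed

lemma best_remaining_in_sample:
  assumes HU: "H \<subseteq> U" and NH: "N \<subseteq> U - H" and nonempty: "candidates M (U - N) \<noteq> {}"
    and e_def: "e = best f rk M (candidates M (U - N))" and "e \<in> H"
  shows "greedy_step indep f rk H M = insert e M" "preemptors H M \<subseteq> N"
proof -
  have e: "e \<in> candidates M (U - N)" "\<forall>e'\<in>candidates M (U - N). e' \<noteq> e \<longrightarrow> beats f rk M e e'"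
    using best_candidate[of "U - N" M] nonempty unfolding e_def by auto
  have e_H: "e \<in> candidates M H"
    using \<open>e \<in> H\<close> e(1) unfolding candidates_def by auto
  moreover have "candidates M H \<subseteq> candidates M (U - N)"
    using NH HU unfolding candidates_def by auto
  ultimately have "best f rk M (candidates M H) = e"
    using e(2) by (intro best_eqI) auto
  with e_H show "greedy_step indep f rk H M = insert e M"
    using greedy_step_best_candidate by auto
  show "preemptors H M \<subseteq> N"
  proof
    fix d
    assume d: "d \<in> preemptors H M"
    show "d \<in> N"
    proof (rule ccontr)
      assume "d \<notin> N"
      then have "d \<in> candidates M (U - N)" "d \<noteq> e"
        using d \<open>e \<in> H\<close> unfolding preemptors_def candidates_def by auto
      then have "beats f rk M e d"
        using e(2) by blast
      moreover have "beats f rk M d e"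
        using d e_H unfolding preemptors_def by blast
      ultimately show False
        using beats_asym by metis
    qed
  qed
qed

lemma best_remaining_not_in_sample:
  assumes HU: "H \<subseteq> U" and NH: "N \<subseteq> U - H" and nonempty: "candidates M (U - N) \<noteq> {}"
    and e_def: "e = best f rk M (candidates M (U - N))" and "e \<notin> H"
  shows "e \<in> preemptors H M"
proof -
  have e: "e \<in> candidates M (U - N)" "\<forall>e'\<in>candidates M (U - N). e' \<noteq> e \<longrightarrow> beats f rk M e e'"
    using best_candidate[of "U - N" M] nonempty unfolding e_def by auto
  moreover have "candidates M H \<subseteq> candidates M (U - N)"
    using NH HU unfolding candidates_def by auto
  ultimately show ?thesis
    using \<open>e \<notin> H\<close> unfolding preemptors_def candidates_def by auto
qed

lemma sim_invariant_step:
  assumes HU: "H \<subseteq> U" and inv: "sim_invariant H (M, N)"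
  shows "sim_invariant H (sim_step U indep f rk H (M, N))"
proof (cases "candidates M (U - N) = {}")
  case True
  then show ?thesis
    using inv sim_step_no_candidates by simp
next
  case nonempty: False
  obtain j where j: "M = greedy_prefix H j" "\<forall>i<j. preemptors H (greedy_prefix H i) \<subseteq> N"
      "N \<subseteq> (\<Union>i\<le>j. preemptors H (greedy_prefix H i))"
    using inv unfolding sim_invariant_def by auto
  have NH: "N \<subseteq> U - H"
    using sim_invariant_subset[OF HU inv] by simp
  define e where "e = best f rk M (candidates M (U - N))"
  show ?thesis
  proof (cases "e \<in> H")
    case True
    note best = best_remaining_in_sample[OF HU NH nonempty e_def True]
    have "sim_invariant H (insert e M, N)"
      unfolding sim_invariant_def fst_conv snd_conv
    proof (intro exI[of _ "Suc j"] conjI)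
      show "insert e M = greedy_prefix H (Suc j)"
        using best(1) j(1) by simp
      show "\<forall>i<Suc j. preemptors H (greedy_prefix H i) \<subseteq> N"
        using best(2) j(1,2) less_Suc_eq by auto
      show "N \<subseteq> (\<Union>i\<le>Suc j. preemptors H (greedy_prefix H i))"
        using j(3) by fastforce
    qed
    then show ?thesis
      using sim_step_best_candidate[OF nonempty] True unfolding e_def by simp
  next
    case False
    then have "sim_invariant H (M, insert e N)"
      using best_remaining_not_in_sample[OF HU NH nonempty e_def] j
      unfolding sim_invariant_def by (intro exI[of _ j]) auto
    then show ?thesis
      using sim_step_best_candidate[OF nonempty] False unfolding e_def by simp
  qed
qed

lemma sim_run_fixpoint:
  assumes HU: "H \<subseteq> U"
  shows "sim_invariant H (sim_run U indep f rk H)"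
    "sim_step U indep f rk H (sim_run U indep f rk H) = sim_run U indep f rk H"
proof -
  let ?s = "sim_step U indep f rk H"
  have init: "sim_invariant H ({}, {})"
    unfolding sim_invariant_def by (intro exI[of _ 0]) auto
  have step: "sim_invariant H MN \<Longrightarrow> sim_invariant H (?s MN)" for MN
    using sim_invariant_step[OF HU, of "fst MN" "snd MN"] by simp
  have "sim_invariant H ((?s ^^ k) ({}, {}))" for k
    by (induction k) (auto simp: init step)
  then show "sim_invariant H (sim_run U indep f rk H)"
    unfolding sim_run_def .
  show "?s (sim_run U indep f rk H) = sim_run U indep f rk H"
    unfolding sim_run_def
  proof (rule funpow_reaches_fixpoint[where P = "sim_invariant H" and \<mu> = "\<lambda>MN. card (fst MN \<union> snd MN)"])
    show "card (fst MN \<union> snd MN) < card (fst (?s MN) \<union> snd (?s MN))"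
      if "sim_invariant H MN" "?s MN \<noteq> MN" for MN
    proof -
      obtain M N where MN: "MN = (M, N)"
        by fastforce
      then have "candidates M (U - N) \<noteq> {}"
        using that(2) sim_step_no_candidates by auto
      moreover have "finite (M \<union> N)"
        using sim_invariant_subset[OF HU, of M N] that(1) MN HU finite_U
        by (meson Diff_subset finite_Un finite_subset)
      ultimately show ?thesis
        using MN by (elim sim_step_adds_element[where H = H]) auto
    qed
    show "card (fst MN \<union> snd MN) \<le> card U" if "sim_invariant H MN" for MN
      using sim_invariant_subset[OF HU, of "fst MN" "snd MN"] that HU finite_U
      by (intro card_mono) auto
  qed (use init step in auto)
qed

lemma sim_run_eq_preemptors:
  assumes HU: "H \<subseteq> U"
  shows "sim_run U indep f rk H = (greedy indep f rk H, \<Union>k. preemptors H (greedy_prefix H k))"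
proof -
  obtain M N where MN: "sim_run U indep f rk H = (M, N)"
    by fastforce
  obtain j where j: "M = greedy_prefix H j" "\<forall>i<j. preemptors H (greedy_prefix H i) \<subseteq> N"
      "N \<subseteq> (\<Union>i\<le>j. preemptors H (greedy_prefix H i))"
    using sim_run_fixpoint(1)[OF HU] MN unfolding sim_invariant_def by auto
  have stuck: "candidates M (U - N) = {}"
  proof (rule ccontr)
    assume "candidates M (U - N) \<noteq> {}"
    then obtain e where "e \<notin> M \<union> N"
      "fst (sim_step U indep f rk H (M, N)) \<union> snd (sim_step U indep f rk H (M, N)) = insert e (M \<union> N)"
      by (rule sim_step_adds_element)
    with sim_run_fixpoint(2)[OF HU] MN show False
      by auto
  qed
  moreover have "N \<subseteq> U - H"
    using sim_invariant_subset(2)[OF HU] sim_run_fixpoint(1)[OF HU] MN by simp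
  then have "candidates M H \<subseteq> candidates M (U - N)"
    using HU unfolding candidates_def by blast
  ultimately have fixed: "greedy_step indep f rk H (greedy_prefix H j) = greedy_prefix H j"
    using greedy_step_no_candidates j(1) by auto
  have "preemptors H (greedy_prefix H k) \<subseteq> N" for k
  proof (cases "k < j")
    case False
    then have "greedy_prefix H k = M"
      using greedy_prefix_stable[OF fixed, of k] j(1) by simp
    with stuck show ?thesis
      unfolding preemptors_def candidates_def by auto
  qed (use j(2) in blast)
  then have "N = (\<Union>k. preemptors H (greedy_prefix H k))"
    using j(3) by blast
  with MN j(1) greedy_eq_greedy_prefix[OF HU fixed] show ?thesis
    by simp
qed

lemma sim_run_eq_greedy_outcome:
  assumes "H \<subseteq> U"
  shows "(H, fst (sim_run U indep f rk H), snd (sim_run U indep f rk H)) = greedy_outcome H"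
proof -
  have "(\<Union>k. preemptors H (greedy_prefix H k)) =
      {e \<in> U - H. greedy indep f rk (insert e H) \<noteq> greedy indep f rk H}"
    using greedy_insert_changes_iff[OF assms] unfolding preemptors_def candidates_def by blast
  then show ?thesis
    using sim_run_eq_preemptors[OF assms] unfolding greedy_outcome_def by simp
qed

lemma simulate_eq_map_random_subset:
  "simulate U indep f rk p = map_pmf greedy_outcome
     (map_pmf (\<lambda>b. {e \<in> U. b e}) (Pi_pmf U False (\<lambda>_. bernoulli_pmf p)))"
proof -
  have "simulate U indep f rk p =
      map_pmf (\<lambda>b. greedy_outcome {e \<in> U. b e}) (Pi_pmf U False (\<lambda>_. bernoulli_pmf p))"
    unfolding simulate_def Let_def map_pmf_def
    by (intro bind_pmf_cong refl arg_cong[where f = return_pmf] sim_run_eq_greedy_outcome) auto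
  then show ?thesis
    by (simp add: pmf.map_comp o_def)
qed

lemma online_eq_map_random_prefix:
  "online U indep f rk p = map_pmf greedy_outcome
     (bind_pmf (pmf_of_set (permutations_of_set U))
        (\<lambda>xs. map_pmf (\<lambda>m. set (take m xs)) (binomial_pmf (card U) p)))"
proof -
  have "online U indep f rk p = bind_pmf (pmf_of_set (permutations_of_set U))
      (\<lambda>xs. map_pmf (\<lambda>m. greedy_outcome (set (take m xs))) (binomial_pmf (card U) p))"
    unfolding online_def Let_def map_pmf_def
  proof (intro bind_pmf_cong refl)
    fix xs m
    assume "xs \<in> set_pmf (pmf_of_set (permutations_of_set U))"
    then have "distinct xs" "set xs = U"
      using finite_U permutations_of_setD by auto
    then have "set (drop m xs) = U - set (take m xs)"
      using set_drop_eq_set_Diff_set_take by metis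
    then show "return_pmf (set (take m xs), greedy indep f rk (set (take m xs)),
          {e \<in> set (drop m xs). greedy indep f rk (insert e (set (take m xs))) \<noteq>
                               greedy indep f rk (set (take m xs))}) =
        return_pmf (greedy_outcome (set (take m xs)))"
      unfolding greedy_outcome_def by simp
  qed
  then show ?thesis
    by (simp add: map_bind_pmf pmf.map_comp o_def)
qed

end

theorem lemma1:
  fixes U :: "'a set" and indep :: "'a set \<Rightarrow> bool" and f :: "'a set \<Rightarrow> real"
    and rk :: "'a \<Rightarrow> nat" and p :: real
  assumes "matroid U indep"
    and "nonneg_on U f" and "monotone_set_fun U f" and "submodular U f"
    and "inj_on rk U"
    and "0 < p" and "p < 1"
  shows "simulate U indep f rk p = online U indep f rk p"
proof -
  interpret greedy_instance U indep f rk
    using assms(1,5) by unfold_locales (simp_all add: matroid_def)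
  show ?thesis
    unfolding simulate_eq_map_random_subset online_eq_map_random_prefix
    using random_subset_eq_random_prefix[OF finite_U] assms(6,7) by simp
qed

end
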